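(* Let $D_1,\dots,D_n\in\mathbb{R}^{d\times m}$, $\mathbf{1}\in\mathbb{R}^m$ the all-ones vector, $\tilde{D}_i=\begin{bmatrix}D_i\\ \mathbf{1}^{\top}\end{bmatrix}$ and $\bar{D}_i=D_i-\frac{1}{m}D_i\mathbf{1}\mathbf{1}^{\top}$, and assume each $\tilde{D}_i\tilde{D}_i^{\top}$ (equivalently each $\bar{D}_i\bar{D}_i^{\top}$) is invertible. Let $\mathcal{Q}_I=\sum_{i=1}^n\tilde{D}_i^{\top}(\tilde{D}_i\tilde{D}_i^{\top})^{-1}\tilde{D}_i$ and $\mathfrak{Q}_\circ=\sum_{i=1}^n\bar{D}_i^{\top}(\bar{D}_i\bar{D}_i^{\top})^{-1}\bar{D}_i$. Then $\mathcal{Q}_I=\frac{n}{m}\mathbf{1}\mathbf{1}^{\top}+\mathfrak{Q}_\circ$. Moreover the $d$ top eigenvectors of $\mathcal{Q}_I$ excluding the vector $\mathbf{1}$ are the $d$ top eigenvectors of $\mathfrak{Q}_\circ$, so that, for a fixed diagonal $\Lambda$, the problems $$\min_{\{\tilde{A}_i\in\mathbb{R}^{d\times(d+1)}\},S}\sum_{i=1}^n\|\tilde{A}_i\tilde{D}_i-S\|_F^2\ \text{s.t.}\ SS^{\top}=\Lambda,\ S\mathbf{1}=0$$ and $$\min_{\{A_i\in\mathbb{R}^{d\times d}\},S}\sum_{i=1}^n\|A_i\bar{D}_i-S\|_F^2\ \text{s.t.}\ SS^{\top}=\Lambda$$ give the same optimal reference shape $S$.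
   Context: "The $d$ top eigenvectors" of a symmetric matrix are orthonormal eigenvectors associated with its $d$ largest eigenvalues, taken in non-increasing order of eigenvalue; "excluding $\mathbf{1}$" means the eigenvector $\mathbf{1}$ is removed before selecting them. *)

theory Defs
  imports "HOL-Analysis.Analysis"
begin

text \<open>Matrices are rendered with HOL-Analysis Cartesian types: a d x m real matrix
  is a value of type real^'m^'d (rows indexed by 'd, columns by 'm), so d = CARD('d),
  m = CARD('m). The Frobenius norm of a matrix is the Euclidean norm on this type.\<close>

definition ones :: "real^'m" where
  "ones = (\<chi> j. 1)"

definition ones_mat :: "real^'m^'m" where
  "ones_mat = (\<chi> j k. 1)"

text \<open>The augmented matrix [D; 1^T]; the extra row is indexed by None.\<close>
definition aug_mat :: "real^'m^'d \<Rightarrow> real^'m^('d option)" where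
  "aug_mat D = (\<chi> r. case r of Some k \<Rightarrow> D $ k | None \<Rightarrow> ones)"

definition centered_mat :: "real^'m^'d \<Rightarrow> real^'m^'d" where
  "centered_mat D = D - (1 / real CARD('m)) *\<^sub>R (D ** ones_mat)"

text \<open>v_0,...,v_{d-1} are "the d top eigenvectors" of Q: orthonormal eigenvectors
  for the d largest eigenvalues in non-increasing order, i.e. the first d members of an
  orthonormal eigenbasis of R^m whose eigenvalues are listed in non-increasing order.\<close>
definition top_eigvecs :: "real^'m^'m \<Rightarrow> nat \<Rightarrow> (nat \<Rightarrow> real^'m) \<Rightarrow> bool" where
  "top_eigvecs Q d v \<longleftrightarrow> d \<le> CARD('m) \<and>
     (\<exists>(u::nat \<Rightarrow> real^'m) (\<mu>::nat \<Rightarrow> real).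
        (\<forall>j<CARD('m). \<forall>k<CARD('m). u j \<bullet> u k = (if j = k then 1 else 0)) \<and>
        (\<forall>j<CARD('m). Q *v u j = \<mu> j *\<^sub>R u j) \<and>
        (\<forall>j k. j \<le> k \<and> k < CARD('m) \<longrightarrow> \<mu> k \<le> \<mu> j) \<and>
        (\<forall>k<d. v k = u k))"

text \<open>The d top eigenvectors of Q excluding the eigenvector 1: the vector 1 is an
  eigenvector of Q, it is removed from an orthonormal eigenbasis, and the d top ones are
  selected from the remaining orthonormal eigenbasis of the orthogonal complement of 1.\<close>
definition top_eigvecs_excl_ones :: "real^'m^'m \<Rightarrow> nat \<Rightarrow> (nat \<Rightarrow> real^'m) \<Rightarrow> bool" where
  "top_eigvecs_excl_ones Q d v \<longleftrightarrow> d \<le> CARD('m) - 1 \<and>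
     (\<exists>c. Q *v ones = c *\<^sub>R ones) \<and>
     (\<exists>(u::nat \<Rightarrow> real^'m) (\<mu>::nat \<Rightarrow> real).
        (\<forall>j<CARD('m) - 1. u j \<bullet> ones = 0) \<and>
        (\<forall>j<CARD('m) - 1. \<forall>k<CARD('m) - 1. u j \<bullet> u k = (if j = k then 1 else 0)) \<and>
        (\<forall>j<CARD('m) - 1. Q *v u j = \<mu> j *\<^sub>R u j) \<and>
        (\<forall>j k. j \<le> k \<and> k < CARD('m) - 1 \<longrightarrow> \<mu> k \<le> \<mu> j) \<and>
        (\<forall>k<d. v k = u k))"

definition opt_ref_shape ::
  "nat \<Rightarrow> (nat \<Rightarrow> real^'m^'c) \<Rightarrow> (real^'m^'d \<Rightarrow> bool) \<Rightarrow> real^'m^'d \<Rightarrow> bool" where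
  "opt_ref_shape n M C S \<longleftrightarrow> C S \<and>
     (\<exists>A::nat \<Rightarrow> real^'c^'d. \<forall>(A'::nat \<Rightarrow> real^'c^'d) S'. C S' \<longrightarrow>
        (\<Sum>i=1..n. (norm (A i ** M i - S))\<^sup>2) \<le> (\<Sum>i=1..n. (norm (A' i ** M i - S'))\<^sup>2))"

end

(* P(X) = X^T (X X^T)^-1 X is the orthogonal projection onto the row space of X, so Q_I and Q_o
   are sums of such projections. The row space of [D; 1^T] is the orthogonal sum of span{1} and
   the row space of the centred matrix, whence Q_I = (n/m) 1 1^T + Q_o.

   Q_o is positive semidefinite, kills 1, and is positive definite on the d-dimensional row space
   of any centred D_i; hence its top d eigenvalues are positive, their eigenvectors are orthogonal
   to 1, and its least eigenvalue is 0. A Householder reflection exchanging the last eigenvector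
   with 1/sqrt m commutes with Q_o and fixes the top d eigenvectors, which converts an eigenbasis
   of Q_o into one of Q_I on the complement of 1 and back.

   For fixed S the A_i are eliminated by least squares, leaving the maximisation of tr(S Q S^T)
   over shapes with S S^T = Lambda. A maximiser for Q_o has S 1 = 0: otherwise reflecting the
   rows of S in a suitable hyperplane keeps S S^T and strictly increases the trace. On such S
   the traces for Q_I and Q_o agree, so both problems have the same optimal shapes. *)

theory Submission
  imports Defs
begin

declare transpose_matrix_vector[simp del] vector_transpose_matrix[simp del]

lemma matrix_inv_inverse:
  fixes A :: "real^'n^'n"
  assumes "invertible A"
  shows matrix_inv_right: "A ** matrix_inv A = mat 1"
    and matrix_inv_left: "matrix_inv A ** A = mat 1"
  using someI_ex[of "\<lambda>A'. A ** A' = mat 1 \<and> A' ** A = mat 1"] assms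
  unfolding invertible_def matrix_inv_def by auto

lemma inner_transpose_matrix_vector: "(transpose X *v w) \<bullet> (y::real^_) = w \<bullet> (X *v y)"
  by (simp add: transpose_matrix_vector dot_lmul_matrix)

lemma matrix_vector_mult_nth: "((S::real^'a^'b) *v x) $ k = S $ k \<bullet> x"
  by (simp add: matrix_vector_mult_def inner_vec_def mult.commute)

lemma row_matrix_matrix_mult: "((A::real^_^_) ** X) $ k = transpose X *v (A $ k)"
  by (simp add: vec_eq_iff matrix_matrix_mult_def matrix_vector_mult_def transpose_def
      mult.commute[of "A $ k $ _"])

lemma gram_matrix_eq: "A ** transpose A = (\<chi> i j. A $ i \<bullet> (A $ j :: real^_))"
  by (simp add: matrix_matrix_mult_def transpose_def inner_vec_def vec_eq_iff)

lemma power2_norm_matrix: "(norm (M::real^'a^'b))\<^sup>2 = (\<Sum>k\<in>UNIV. (norm (M $ k))\<^sup>2)"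
  by (simp add: power2_norm_eq_inner inner_vec_def)

lemma sum_matrix_vector_mult: "(\<Sum>i\<in>I. A i) *v (x::real^_) = (\<Sum>i\<in>I. A i *v x)"
  by (induct I rule: infinite_finite_induct) (simp_all add: matrix_vector_mult_add_rdistrib)

lemma matrix_vector_mult_sum: "A *v (\<Sum>i\<in>I. f i) = (\<Sum>i\<in>I. A *v (f i :: real^_))"
  by (induct I rule: infinite_finite_induct) (simp_all add: matrix_vector_right_distrib)

lemma invertible_kernel_zero: "invertible (M::real^'n^'n) \<Longrightarrow> M *v x = 0 \<Longrightarrow> x = 0"
  by (metis inj_matrix_vector_mult matrix_vector_mult_0_right injD)

lemma invertible_if_kernel_zero: "(\<And>x. (M::real^'n^'n) *v x = 0 \<Longrightarrow> x = 0) \<Longrightarrow> invertible M"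
  by (metis invertible_left_inverse matrix_left_invertible_ker)

lemma transpose_kernel_of_gram_kernel:
  "(X ** transpose X) *v y = 0 \<Longrightarrow> transpose X *v (y::real^_) = 0"
proof -
  assume "(X ** transpose X) *v y = 0"
  then have "(transpose X *v y) \<bullet> (transpose X *v y) = 0"
    by (simp add: inner_transpose_matrix_vector matrix_vector_mul_assoc)
  then show ?thesis by simp
qed

lemma transpose_injective_of_invertible_gram:
  "invertible (X ** transpose X) \<Longrightarrow> transpose X *v (z::real^_) = 0 \<Longrightarrow> z = 0"
  by (metis invertible_kernel_zero matrix_vector_mul_assoc matrix_vector_mult_0_right)

lemma dim_UNIV_cart: "dim (UNIV::(real^'n) set) = CARD('n)"
  by (metis dim_vec_eq vec_dim_card)

lemma card_le_of_invertible_gram: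
  fixes X :: "real^'m^'k"
  assumes "invertible (X ** transpose X)"
  shows "CARD('k) \<le> CARD('m)"
proof -
  let ?f = "\<lambda>z::real^'k. transpose X *v z"
  have "inj_on ?f (span UNIV)"
  proof (rule inj_onI)
    fix x y assume "?f x = ?f y"
    then have "?f (x - y) = 0" by (simp add: matrix_vector_mult_diff_distrib)
    then have "x - y = 0" by (rule transpose_injective_of_invertible_gram[OF assms])
    then show "x = y" by simp
  qed
  then have "dim (?f ` UNIV) = dim (UNIV :: (real^'k) set)"
    by (rule dim_image_eq[OF matrix_vector_mul_linear])
  then have "dim (?f ` UNIV) = CARD('k)" by (simp only: dim_UNIV_cart)
  then show ?thesis using dim_subset_UNIV_cart[of "?f ` UNIV"] by simp
qed

section \<open>Orthogonal projection onto the row space\<close>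

definition row_proj :: "real^'m^'k \<Rightarrow> real^'m^'m" where
  "row_proj X = transpose X ** matrix_inv (X ** transpose X) ** X"

context
  fixes X :: "real^'m^'k"
  assumes inv: "invertible (X ** transpose X)"
begin

lemma row_proj_apply:
  "row_proj X *v y = transpose X *v (matrix_inv (X ** transpose X) *v (X *v y))"
  unfolding row_proj_def by (simp only: matrix_vector_mul_assoc matrix_mul_assoc)

lemma row_proj_transpose: "row_proj X *v (transpose X *v z) = transpose X *v z"
proof -
  have "matrix_inv (X ** transpose X) *v (X *v (transpose X *v z)) = z"
    by (simp add: matrix_vector_mul_assoc matrix_inv_left[OF inv])
  then show ?thesis by (simp only: row_proj_apply)
qed

lemma row_proj_kernel: "X *v y = 0 \<Longrightarrow> row_proj X *v y = 0"
  by (simp add: row_proj_apply)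

lemma matrix_vector_row_proj: "X *v (row_proj X *v y) = X *v y"
proof -
  have "X *v (row_proj X *v y)
      = ((X ** transpose X) ** matrix_inv (X ** transpose X)) *v (X *v y)"
    by (simp only: row_proj_apply matrix_vector_mul_assoc matrix_mul_assoc)
  then show ?thesis by (simp only: matrix_inv_right[OF inv] matrix_vector_mul_lid)
qed

lemma inner_row_proj: "x \<bullet> (row_proj X *v y) = (row_proj X *v x) \<bullet> (row_proj X *v y)"
proof -
  define w where "w = matrix_inv (X ** transpose X) *v (X *v y)"
  have Py: "row_proj X *v y = transpose X *v w" by (simp add: row_proj_apply w_def)
  have "x \<bullet> (row_proj X *v y) = (X *v x) \<bullet> w"
    by (metis Py inner_transpose_matrix_vector inner_commute)
  also have "\<dots> = (X *v (row_proj X *v x)) \<bullet> w" by (simp only: matrix_vector_row_proj)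
  also have "\<dots> = (row_proj X *v x) \<bullet> (row_proj X *v y)"
    by (metis Py inner_transpose_matrix_vector inner_commute)
  finally show ?thesis .
qed

lemma row_proj_symmetric: "x \<bullet> (row_proj X *v y) = y \<bullet> (row_proj X *v x)"
  by (metis inner_row_proj inner_commute)

lemma row_proj_nonneg: "0 \<le> x \<bullet> (row_proj X *v x)"
  by (subst inner_row_proj) simp

lemma row_proj_unique:
  assumes fixes_rows: "\<And>z. Q *v (transpose X *v z) = transpose X *v z"
    and kernel: "\<And>y. X *v y = 0 \<Longrightarrow> Q *v y = 0"
  shows "Q = row_proj X"
  unfolding matrix_eq
proof
  fix y
  define w where "w = matrix_inv (X ** transpose X) *v (X *v y)"
  have Py: "row_proj X *v y = transpose X *v w" by (simp add: row_proj_apply w_def)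
  have "X *v (y - transpose X *v w) = 0"
    using matrix_vector_row_proj[of y] by (simp add: Py matrix_vector_mult_diff_distrib)
  then have "Q *v (y - transpose X *v w) = 0" by (rule kernel)
  then show "Q *v y = row_proj X *v y"
    by (simp add: matrix_vector_mult_diff_distrib fixes_rows Py)
qed

lemma least_squares_row_proj:
  "(norm s)\<^sup>2 - s \<bullet> (row_proj X *v s) \<le> (norm (transpose X *v a - s))\<^sup>2"
  "(norm (row_proj X *v s - s))\<^sup>2 = (norm s)\<^sup>2 - s \<bullet> (row_proj X *v s)"
proof -
  let ?p = "row_proj X *v s"
  have residual: "(norm (?p - s))\<^sup>2 = (norm s)\<^sup>2 - s \<bullet> ?p"
    using inner_row_proj[of s s]
    by (simp add: power2_norm_eq_inner inner_diff_left inner_diff_right inner_commute)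
  have orth: "(transpose X *v b) \<bullet> (?p - s) = 0" for b
    by (simp only: inner_transpose_matrix_vector matrix_vector_mult_diff_distrib
        matrix_vector_row_proj diff_self inner_zero_right)
  define c where "c = matrix_inv (X ** transpose X) *v (X *v s)"
  have "?p = transpose X *v c" by (simp only: row_proj_apply c_def)
  then have "transpose X *v a - s = transpose X *v (a - c) + (?p - s)"
    by (simp add: matrix_vector_mult_diff_distrib)
  then have "(norm (transpose X *v a - s))\<^sup>2 = (norm (transpose X *v (a - c)))\<^sup>2 + (norm (?p - s))\<^sup>2"
    by (simp only: norm_add_Pythagorean orthogonal_def orth)
  then show "(norm s)\<^sup>2 - s \<bullet> ?p \<le> (norm (transpose X *v a - s))\<^sup>2"
    using residual by simp
  show "(norm (?p - s))\<^sup>2 = (norm s)\<^sup>2 - s \<bullet> ?p" by (rule residual)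
qed

end

lemma sum_row_proj_symmetric:
  assumes "\<forall>i\<in>I. invertible (X i ** transpose (X i))"
  shows "x \<bullet> ((\<Sum>i\<in>I. row_proj (X i)) *v y) = y \<bullet> ((\<Sum>i\<in>I. row_proj (X i)) *v x)"
  unfolding sum_matrix_vector_mult inner_sum_right
  using assms row_proj_symmetric by (blast intro: sum.cong)

lemma sum_row_proj_nonneg:
  assumes "\<forall>i\<in>I. invertible (X i ** transpose (X i))"
  shows "0 \<le> x \<bullet> ((\<Sum>i\<in>I. row_proj (X i)) *v x)"
  unfolding sum_matrix_vector_mult inner_sum_right
  using assms row_proj_nonneg by (blast intro: sum_nonneg)

lemma sum_row_proj_kernel:
  assumes "\<forall>i\<in>I. invertible (X i ** transpose (X i))" and "\<forall>i\<in>I. X i *v z = 0"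
  shows "(\<Sum>i\<in>I. row_proj (X i)) *v z = 0"
  unfolding sum_matrix_vector_mult using assms row_proj_kernel by (blast intro: sum.neutral)

lemma sum_row_proj_pos:
  assumes inv: "\<forall>i\<in>I. invertible (X i ** transpose (X i))" and "finite I" "j \<in> I" "y \<noteq> 0"
  shows "0 < (transpose (X j) *v y) \<bullet> ((\<Sum>i\<in>I. row_proj (X i)) *v (transpose (X j) *v y))"
proof -
  let ?x = "transpose (X j) *v y"
  have "0 < ?x \<bullet> ?x"
    using assms transpose_injective_of_invertible_gram by fastforce
  also have "\<dots> = ?x \<bullet> (row_proj (X j) *v ?x)"
    using assms row_proj_transpose[of "X j"] by simp
  also have "\<dots> \<le> (\<Sum>i\<in>I. ?x \<bullet> (row_proj (X i) *v ?x))"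
    using assms row_proj_nonneg by (intro member_le_sum) auto
  finally show ?thesis by (simp add: sum_matrix_vector_mult inner_sum_right)
qed

lemma ones_nth [simp]: "ones $ j = 1"
  by (simp add: ones_def)

lemma inner_ones_ones: "ones \<bullet> (ones::real^'m) = real CARD('m)"
  by (simp add: inner_vec_def)

lemma ones_mat_matrix_vector: "ones_mat *v x = (ones \<bullet> x) *\<^sub>R ones"
  by (simp add: ones_mat_def matrix_vector_mult_def inner_vec_def vec_eq_iff)

lemma matrix_vector_ones_mat_plus:
  "(c *\<^sub>R ones_mat + Q) *v x = (c * (ones \<bullet> x)) *\<^sub>R ones + Q *v x"
  by (simp add: matrix_vector_mult_add_rdistrib ones_mat_matrix_vector flip: scaleR_matrix_vector_assoc)

lemma transpose_ones_mat: "transpose ones_mat = ones_mat"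
  by (simp add: transpose_def vec_eq_iff ones_mat_def)

lemma transpose_diff: "transpose (A - B) = transpose A - transpose (B::real^'a^'b)"
  by (simp add: transpose_def vec_eq_iff)

lemma centered_mat_matrix_vector:
  "centered_mat (D::real^'m^'d) *v x = D *v x - ((ones \<bullet> x) / real CARD('m)) *\<^sub>R (D *v ones)"
  unfolding centered_mat_def
  by (simp add: matrix_vector_mult_diff_rdistrib ones_mat_matrix_vector matrix_vector_mult_scaleR
      flip: matrix_vector_mul_assoc scaleR_matrix_vector_assoc)

lemma centered_mat_ones: "centered_mat (D::real^'m^'d) *v ones = 0"
  by (simp add: centered_mat_matrix_vector inner_ones_ones)

lemma transpose_centered_mat_matrix_vector:
  "transpose (centered_mat (D::real^'m^'d)) *v y
     = transpose D *v y - ((ones \<bullet> (transpose D *v y)) / real CARD('m)) *\<^sub>R ones"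
proof -
  have "transpose (centered_mat D) = transpose D - (1 / real CARD('m)) *\<^sub>R (ones_mat ** transpose D)"
    unfolding centered_mat_def
    by (simp only: transpose_diff transpose_scalar matrix_transpose_mul transpose_ones_mat)
  then show ?thesis
    by (simp add: matrix_vector_mult_diff_rdistrib ones_mat_matrix_vector
        flip: matrix_vector_mul_assoc scaleR_matrix_vector_assoc)
qed

lemma ones_orthogonal_transpose_centered_mat:
  "ones \<bullet> (transpose (centered_mat (D::real^'m^'d)) *v y) = 0"
  by (metis inner_transpose_matrix_vector inner_commute centered_mat_ones inner_zero_right)

lemma aug_mat_matrix_vector:
  "aug_mat D *v x = (\<chi> r. case r of Some k \<Rightarrow> (D *v x) $ k | None \<Rightarrow> ones \<bullet> x)"
  by (simp add: vec_eq_iff aug_mat_def matrix_vector_mult_def inner_vec_def split: option.split)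

lemma sum_UNIV_option:
  "(\<Sum>r\<in>(UNIV::'a::finite option set). f r) = f None + (\<Sum>k\<in>UNIV. f (Some k))"
  by (simp add: UNIV_option_conv sum.reindex)

lemma transpose_aug_mat_matrix_vector:
  "transpose (aug_mat (D::real^'m^'d)) *v z = transpose D *v (\<chi> k. z $ Some k) + (z $ None) *\<^sub>R ones"
  by (simp add: vec_eq_iff aug_mat_def matrix_vector_mult_def transpose_def sum_UNIV_option)

lemma card_le_of_invertible_aug_gram:
  fixes D :: "real^'m^'d"
  assumes "invertible (aug_mat D ** transpose (aug_mat D))"
  shows "CARD('d) \<le> CARD('m) - 1"
  using card_le_of_invertible_gram[OF assms] by simp

lemma invertible_gram_centered_mat:
  fixes D :: "real^'m^'d"
  assumes inv: "invertible (aug_mat D ** transpose (aug_mat D))"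
  shows "invertible (centered_mat D ** transpose (centered_mat D))"
proof (rule invertible_if_kernel_zero)
  fix y assume "(centered_mat D ** transpose (centered_mat D)) *v y = 0"
  then have "transpose (centered_mat D) *v y = 0" by (rule transpose_kernel_of_gram_kernel)
  then have Dy: "transpose D *v y = ((ones \<bullet> (transpose D *v y)) / real CARD('m)) *\<^sub>R ones"
    by (simp add: transpose_centered_mat_matrix_vector)
  \<comment> \<open>D^T y is a multiple of 1, so y extended by minus that multiple is killed by the
    transposed augmented matrix\<close>
  define z :: "real^'d option" where
    "z = (\<chi> r. case r of Some k \<Rightarrow> y $ k | None \<Rightarrow> - (ones \<bullet> (transpose D *v y)) / real CARD('m))"
  have "(\<chi> k. z $ Some k) = y" by (simp add: z_def vec_eq_iff)
  then have "transpose (aug_mat D) *v z = 0"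
    by (simp add: transpose_aug_mat_matrix_vector) (subst Dy, simp add: z_def)
  then have "z = 0" by (rule transpose_injective_of_invertible_gram[OF inv])
  then show "y = 0" by (metis \<open>(\<chi> k. z $ Some k) = y\<close> vec_lambda_unique zero_index)
qed

lemma row_proj_aug_mat:
  fixes D :: "real^'m^'d"
  assumes inv: "invertible (aug_mat D ** transpose (aug_mat D))"
  shows "row_proj (aug_mat D) = (1 / real CARD('m)) *\<^sub>R ones_mat + row_proj (centered_mat D)"
proof -
  let ?C = "centered_mat D"
  let ?Q = "(1 / real CARD('m)) *\<^sub>R ones_mat + row_proj ?C"
  have inv_C: "invertible (?C ** transpose ?C)" by (rule invertible_gram_centered_mat[OF inv])
  have Q_apply: "?Q *v x = ((ones \<bullet> x) / real CARD('m)) *\<^sub>R ones + row_proj ?C *v x" for x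
    by (simp add: matrix_vector_ones_mat_plus)
  have Q_ones: "?Q *v ones = ones"
    by (simp add: Q_apply inner_ones_ones row_proj_kernel[OF inv_C centered_mat_ones])
  have Q_C: "?Q *v (transpose ?C *v w) = transpose ?C *v w" for w
    by (simp add: Q_apply ones_orthogonal_transpose_centered_mat row_proj_transpose[OF inv_C])
  have Q_D: "?Q *v (transpose D *v w) = transpose D *v w" for w
  proof -
    define \<beta> where "\<beta> = (ones \<bullet> (transpose D *v w)) / real CARD('m)"
    have "transpose D *v w = transpose ?C *v w + \<beta> *\<^sub>R ones"
      by (simp add: transpose_centered_mat_matrix_vector \<beta>_def)
    then show ?thesis
      by (simp add: matrix_vector_right_distrib matrix_vector_mult_scaleR Q_C Q_ones)
  qed
  show ?thesis
  proof (rule row_proj_unique[OF inv, symmetric])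
    show "?Q *v (transpose (aug_mat D) *v z) = transpose (aug_mat D) *v z" for z
      by (simp add: transpose_aug_mat_matrix_vector matrix_vector_right_distrib
          matrix_vector_mult_scaleR Q_D Q_ones)
  next
    fix y assume "aug_mat D *v y = 0"
    then have "D *v y = 0" "ones \<bullet> y = 0"
      by (auto simp: aug_mat_matrix_vector vec_eq_iff dest: spec[of _ None] spec[of _ "Some _"])
    then show "?Q *v y = 0"
      by (simp add: Q_apply row_proj_kernel[OF inv_C] centered_mat_matrix_vector)
  qed
qed

lemma sum_row_proj_aug_mat:
  fixes D :: "nat \<Rightarrow> real^'m^'d"
  assumes "\<forall>i\<in>{1..n}. invertible (aug_mat (D i) ** transpose (aug_mat (D i)))"
  shows "(\<Sum>i=1..n. row_proj (aug_mat (D i)))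
     = (real n / real CARD('m)) *\<^sub>R ones_mat + (\<Sum>i=1..n. row_proj (centered_mat (D i)))"
proof -
  have "(\<Sum>i=1..n. row_proj (aug_mat (D i)))
      = (\<Sum>i=1..n. (1 / real CARD('m)) *\<^sub>R ones_mat + row_proj (centered_mat (D i)))"
    using assms by (intro sum.cong) (simp_all add: row_proj_aug_mat)
  then show ?thesis by (simp add: sum.distrib sum_constant_scaleR del: sum_constant)
qed

section \<open>Elimination of the transformations by least squares\<close>

definition trace_form :: "real^'m^'m \<Rightarrow> real^'m^'d \<Rightarrow> real" where
  "trace_form Q S = (\<Sum>k\<in>UNIV. S $ k \<bullet> (Q *v S $ k))"

definition maximizes_trace_form ::
  "real^'m^'m \<Rightarrow> (real^'m^'d \<Rightarrow> bool) \<Rightarrow> real^'m^'d \<Rightarrow> bool" where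
  "maximizes_trace_form Q C S \<longleftrightarrow> C S \<and> (\<forall>S'. C S' \<longrightarrow> trace_form Q S' \<le> trace_form Q S)"

lemma trace_form_sum: "trace_form (\<Sum>i\<in>I. Q i) S = (\<Sum>i\<in>I. trace_form (Q i) S)"
  unfolding trace_form_def sum_matrix_vector_mult inner_sum_right by (rule sum.swap)

lemma trace_form_add: "trace_form (Q1 + Q2) S = trace_form Q1 S + trace_form Q2 S"
  unfolding trace_form_def
  by (simp add: matrix_vector_mult_add_rdistrib inner_add_right sum.distrib)

lemma trace_form_scaleR: "trace_form (c *\<^sub>R Q) S = c * trace_form Q S"
  unfolding trace_form_def by (simp add: sum_distrib_left flip: scaleR_matrix_vector_assoc)

lemma trace_form_ones_mat: "S *v ones = 0 \<Longrightarrow> trace_form ones_mat (S::real^'m^'d) = 0"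
  unfolding trace_form_def ones_mat_matrix_vector
  by (simp add: inner_commute[of ones] flip: matrix_vector_mult_nth)

lemma least_squares_matrix:
  fixes X :: "real^'m^'k" and S :: "real^'m^'d"
  assumes inv: "invertible (X ** transpose X)"
  shows "(norm S)\<^sup>2 - trace_form (row_proj X) S \<le> (norm (A ** X - S))\<^sup>2"
    and "(norm ((\<chi> k. matrix_inv (X ** transpose X) *v (X *v S $ k)) ** X - S))\<^sup>2
           = (norm S)\<^sup>2 - trace_form (row_proj X) S"
proof -
  have rows: "(norm S)\<^sup>2 - trace_form (row_proj X) S
      = (\<Sum>k\<in>UNIV. (norm (S $ k))\<^sup>2 - S $ k \<bullet> (row_proj X *v S $ k))"
    by (simp add: power2_norm_matrix trace_form_def sum_subtractf)
  have residual: "(norm (B ** X - S))\<^sup>2 = (\<Sum>k\<in>UNIV. (norm (transpose X *v B $ k - S $ k))\<^sup>2)"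
    for B :: "real^'k^'d"
    by (simp add: power2_norm_matrix row_matrix_matrix_mult)
  show "(norm S)\<^sup>2 - trace_form (row_proj X) S \<le> (norm (A ** X - S))\<^sup>2"
    unfolding rows residual by (intro sum_mono least_squares_row_proj(1)[OF inv])
  show "(norm ((\<chi> k. matrix_inv (X ** transpose X) *v (X *v S $ k)) ** X - S))\<^sup>2
           = (norm S)\<^sup>2 - trace_form (row_proj X) S"
    unfolding rows residual
    by (intro sum.cong) (simp_all add: least_squares_row_proj(2)[OF inv] flip: row_proj_apply[OF inv])
qed

text \<open>Minimising over the A_i first leaves the value n |S|^2 - tr(S Q S^T),
  and |S| is constant on the feasible set.\<close>
lemma opt_ref_shape_iff_maximizes_trace_form:
  fixes M :: "nat \<Rightarrow> real^'m^'c" and C :: "real^'m^'d \<Rightarrow> bool"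
  assumes inv: "\<forall>i\<in>{1..n}. invertible (M i ** transpose (M i))"
    and norm_const: "\<And>S. C S \<Longrightarrow> (norm S)\<^sup>2 = K"
  shows "opt_ref_shape n M C S \<longleftrightarrow> maximizes_trace_form (\<Sum>i=1..n. row_proj (M i)) C S"
proof -
  let ?Q = "\<Sum>i=1..n. row_proj (M i)"
  define W where "W S = real n * (norm S)\<^sup>2 - trace_form ?Q S" for S :: "real^'m^'d"
  define V where "V A S = (\<Sum>i=1..n. (norm (A i ** M i - S))\<^sup>2)" for A :: "nat \<Rightarrow> real^'c^'d" and S
  define A_opt where
    "A_opt S = (\<lambda>i. \<chi> k. matrix_inv (M i ** transpose (M i)) *v (M i *v S $ k))" for S :: "real^'m^'d"
  have W_sum: "W S = (\<Sum>i=1..n. (norm S)\<^sup>2 - trace_form (row_proj (M i)) S)" for S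
    by (simp add: W_def trace_form_sum sum_subtractf)
  have W_le_V: "W S \<le> V A S" for A S
    unfolding W_sum V_def using inv by (intro sum_mono least_squares_matrix(1)) auto
  have V_A_opt: "V (A_opt S) S = W S" for S
    unfolding W_sum V_def A_opt_def using inv by (intro sum.cong least_squares_matrix(2)) auto
  have "opt_ref_shape n M C S \<longleftrightarrow> C S \<and> (\<exists>A. \<forall>A' S'. C S' \<longrightarrow> V A S \<le> V A' S')"
    unfolding opt_ref_shape_def V_def by simp
  also have "\<dots> \<longleftrightarrow> C S \<and> (\<forall>S'. C S' \<longrightarrow> W S \<le> W S')"
    by (metis W_le_V V_A_opt order_trans)
  also have "\<dots> \<longleftrightarrow> maximizes_trace_form ?Q C S"
    using norm_const by (auto simp: W_def maximizes_trace_form_def)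
  finally show ?thesis .
qed

section \<open>Householder reflections and centred optimal shapes\<close>

definition householder :: "'a::real_inner \<Rightarrow> 'a \<Rightarrow> 'a" where
  "householder v x = x - (2 * (v \<bullet> x) / (v \<bullet> v)) *\<^sub>R v"

lemma householder_zero [simp]: "householder 0 x = x"
  by (simp add: householder_def)

lemma householder_orthogonal: "v \<bullet> x = 0 \<Longrightarrow> householder v x = x"
  by (simp add: householder_def)

lemma householder_scaleR: "householder v (c *\<^sub>R x) = c *\<^sub>R householder v x"
  by (simp add: householder_def algebra_simps)

lemma inner_householder: "householder v x \<bullet> householder v y = x \<bullet> y"
proof (cases "v = 0")
  case False
  then have "v \<bullet> v \<noteq> 0" by simp
  then show ?thesis
    unfolding householder_def inner_diff_left inner_diff_right inner_scaleR_left inner_scaleR_right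
    by (simp add: field_simps inner_commute)
qed simp

lemma householder_diff_eq:
  assumes "norm a = norm b"
  shows "householder (a - b) a = b"
proof (cases "a = b")
  case False
  let ?w = "a - b"
  have "a \<bullet> a = b \<bullet> b" using assms by (simp add: dot_square_norm)
  then have eq: "2 * (?w \<bullet> a) = ?w \<bullet> ?w"
    by (simp add: inner_diff_left inner_diff_right inner_commute)
  have "?w \<bullet> ?w \<noteq> 0" using False by simp
  then have "2 * (?w \<bullet> a) / (?w \<bullet> ?w) = 1" unfolding eq by (rule divide_self)
  then have "householder ?w a = a - ?w" by (simp only: householder_def scaleR_one)
  then show ?thesis by simp
qed simp

lemma gram_householder_rows:
  "(\<chi> k. householder v (S $ k)) ** transpose (\<chi> k. householder v (S $ k)) = S ** transpose (S::real^'m^'d)"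
  by (simp add: gram_matrix_eq inner_householder)

text \<open>Reflecting every row of S in v^\<bottom> changes tr(S Q S^T) by
  t^2 (|Sv|^2 v\<bullet>Qv - (v\<bullet>v) (Sv\<bullet>SQv)) with t = 2/(v\<bullet>v).\<close>
lemma trace_form_householder_gt:
  fixes Q :: "real^'m^'m" and S :: "real^'m^'d"
  assumes sym: "\<And>x y. x \<bullet> (Q *v y) = y \<bullet> (Q *v x)"
    and gt: "(v \<bullet> v) * ((S *v v) \<bullet> (S *v (Q *v v))) < (norm (S *v v))\<^sup>2 * (v \<bullet> (Q *v v))"
  shows "trace_form Q S < trace_form Q (\<chi> k. householder v (S $ k))"
proof -
  have "v \<noteq> 0" using gt by auto
  define t where "t = 2 / (v \<bullet> v)"
  have t_pos: "t > 0" and t_vv: "t * (v \<bullet> v) = 2" using \<open>v \<noteq> 0\<close> by (simp_all add: t_def)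
  have row: "householder v s \<bullet> (Q *v householder v s)
      = s \<bullet> (Q *v s) + t\<^sup>2 * (v \<bullet> s)\<^sup>2 * (v \<bullet> (Q *v v)) - 2 * t * ((v \<bullet> s) * (v \<bullet> (Q *v s)))" for s
  proof -
    have h: "householder v s = s - (t * (v \<bullet> s)) *\<^sub>R v" by (simp add: householder_def t_def)
    show ?thesis unfolding h
      using sym[of s v] by (simp add: power2_eq_square algebra_simps)
  qed
  have norm_Sv: "(norm (S *v v))\<^sup>2 = (\<Sum>k\<in>UNIV. (v \<bullet> S $ k)\<^sup>2)"
    unfolding power2_norm_eq_inner inner_vec_def[of "S *v v"] matrix_vector_mult_nth
    by (simp add: inner_commute power2_eq_square)
  have Sv_SQv: "(S *v v) \<bullet> (S *v (Q *v v)) = (\<Sum>k\<in>UNIV. (v \<bullet> S $ k) * (v \<bullet> (Q *v S $ k)))"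
    unfolding inner_vec_def[of "S *v v"] matrix_vector_mult_nth
    by (simp add: inner_commute sym[of v])
  have "trace_form Q (\<chi> k. householder v (S $ k)) - trace_form Q S
      = t\<^sup>2 * (norm (S *v v))\<^sup>2 * (v \<bullet> (Q *v v)) - 2 * t * ((S *v v) \<bullet> (S *v (Q *v v)))"
    unfolding trace_form_def norm_Sv Sv_SQv
    by (simp add: row sum.distrib sum_subtractf sum_distrib_left sum_distrib_right algebra_simps)
  also have "\<dots> = t\<^sup>2 * ((norm (S *v v))\<^sup>2 * (v \<bullet> (Q *v v)) - (v \<bullet> v) * ((S *v v) \<bullet> (S *v (Q *v v))))"
    by (simp flip: t_vv add: power2_eq_square algebra_simps)
  also have "\<dots> > 0" using gt t_pos by simp
  finally show ?thesis by simp
qed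

lemma square_matrix_hits_line:
  fixes M :: "real^'n^'n"
  assumes "a \<noteq> 0"
  shows "\<exists>y \<beta>. y \<noteq> 0 \<and> M *v y = \<beta> *\<^sub>R a"
proof (cases "\<exists>y. y \<noteq> 0 \<and> M *v y = 0")
  case True
  then show ?thesis by (metis scaleR_zero_left)
next
  case False
  then obtain M' where "M' ** M = mat 1" using matrix_left_invertible_ker by blast
  then have "M *v (M' *v a) = a"
    by (simp add: matrix_vector_mul_assoc matrix_left_right_inverse)
  then show ?thesis using assms by (metis matrix_vector_mult_0_right scaleR_one)
qed

text \<open>With S B y = \<beta> S 1, reflecting the rows in v^\<bottom> for v = (\<sigma> - \<beta>) 1 + B y maps
  S 1 to \<sigma> S 1; choosing \<sigma> = 1 or -1 against the sign of S 1 \<bullet> S Q B y makes the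
  increase strict.\<close>
lemma trace_form_increase_unless_centered:
  fixes Q :: "real^'m^'m" and B :: "real^'d^'m" and S :: "real^'m^'d"
  assumes sym: "\<And>x y. x \<bullet> (Q *v y) = y \<bullet> (Q *v x)"
    and Q_ones: "Q *v ones = 0"
    and B_pos: "\<And>y. y \<noteq> 0 \<Longrightarrow> 0 < (B *v y) \<bullet> (Q *v (B *v y))"
    and B_ones: "\<And>y. ones \<bullet> (B *v y) = 0"
    and S_ones: "S *v ones \<noteq> 0"
  shows "\<exists>S'. S' ** transpose S' = S ** transpose S \<and> trace_form Q S < trace_form Q S'"
proof -
  define a where "a = S *v ones"
  obtain y \<beta> where "y \<noteq> 0" and SBy: "(S ** B) *v y = \<beta> *\<^sub>R a"
    using square_matrix_hits_line S_ones unfolding a_def by blast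
  define r where "r = B *v y"
  have rQr: "0 < r \<bullet> (Q *v r)" unfolding r_def by (rule B_pos[OF \<open>y \<noteq> 0\<close>])
  have ones_Qr: "ones \<bullet> (Q *v r) = 0" using sym[of ones r] Q_ones by simp
  define \<sigma> :: real where "\<sigma> = (if 0 < a \<bullet> (S *v (Q *v r)) then -1 else 1)"
  define v where "v = (\<sigma> - \<beta>) *\<^sub>R ones + r"
  have Qv: "Q *v v = Q *v r"
    by (simp add: v_def matrix_vector_right_distrib matrix_vector_mult_scaleR Q_ones)
  have Sv: "S *v v = \<sigma> *\<^sub>R a"
    using SBy by (simp add: v_def r_def a_def matrix_vector_mul_assoc algebra_simps)
  have vQv: "v \<bullet> (Q *v v) = r \<bullet> (Q *v r)"
    unfolding Qv by (simp add: v_def inner_add_left ones_Qr)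
  have norm_Sv: "norm (S *v v) = norm a"
    by (simp add: Sv \<sigma>_def)
  have "(v \<bullet> v) * ((S *v v) \<bullet> (S *v (Q *v v))) \<le> 0"
    by (simp add: Sv Qv \<sigma>_def mult_nonneg_nonpos)
  also have "0 < (norm (S *v v))\<^sup>2 * (v \<bullet> (Q *v v))"
    using rQr S_ones by (simp add: vQv norm_Sv a_def)
  finally show ?thesis
    using trace_form_householder_gt[OF sym] gram_householder_rows by blast
qed

lemma power2_norm_of_gram:
  "S ** transpose S = \<Lambda> \<Longrightarrow> (norm (S::real^'m^'d))\<^sup>2 = (\<Sum>k\<in>UNIV. \<Lambda> $ k $ k)"
  by (auto simp: power2_norm_matrix power2_norm_eq_inner gram_matrix_eq)

lemma trace_form_maximizer_exists:
  fixes Q :: "real^'m^'m" and \<Lambda> :: "real^'d^'d"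
  assumes "\<exists>S::real^'m^'d. S ** transpose S = \<Lambda>"
  shows "\<exists>S::real^'m^'d. maximizes_trace_form Q (\<lambda>S. S ** transpose S = \<Lambda>) S"
proof -
  define F where "F = {S::real^'m^'d. S ** transpose S = \<Lambda>}"
  have "closed F"
    unfolding F_def gram_matrix_eq by (intro closed_Collect_eq continuous_intros)
  moreover have "bounded F"
    unfolding bounded_iff F_def
    by (metis (mono_tags) mem_Collect_eq power2_norm_of_gram order_refl real_le_rsqrt)
  ultimately have "compact F" by (simp add: compact_eq_bounded_closed)
  moreover have "continuous_on F (trace_form Q)"
    unfolding trace_form_def
    by (intro continuous_intros continuous_on_compose2[OF linear_continuous_on[OF
          matrix_vector_mul_bounded_linear]]) auto
  moreover have "F \<noteq> {}" using assms by (auto simp: F_def)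
  ultimately show ?thesis
    using continuous_attains_sup unfolding maximizes_trace_form_def F_def by fastforce
qed

lemma maximizes_trace_form_centered_iff:
  fixes QI Qc :: "real^'m^'m" and B :: "real^'d^'m" and \<Lambda> :: "real^'d^'d"
  assumes sym: "\<And>x y. x \<bullet> (Qc *v y) = y \<bullet> (Qc *v x)"
    and Qc_ones: "Qc *v ones = 0"
    and B_pos: "\<And>y. y \<noteq> 0 \<Longrightarrow> 0 < (B *v y) \<bullet> (Qc *v (B *v y))"
    and B_ones: "\<And>y. ones \<bullet> (B *v y) = 0"
    and QI_Qc: "\<And>S::real^'m^'d. S *v ones = 0 \<Longrightarrow> trace_form QI S = trace_form Qc S"
  shows "maximizes_trace_form QI (\<lambda>S. S ** transpose S = \<Lambda> \<and> S *v ones = 0) S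
     \<longleftrightarrow> maximizes_trace_form Qc (\<lambda>S. S ** transpose S = \<Lambda>) S"
proof -
  have centered: "S *v ones = 0" if "maximizes_trace_form Qc (\<lambda>S. S ** transpose S = \<Lambda>) S"
    for S :: "real^'m^'d"
    using that trace_form_increase_unless_centered[OF sym Qc_ones B_pos B_ones, of S]
    unfolding maximizes_trace_form_def by force
  show ?thesis
  proof
    assume max_I: "maximizes_trace_form QI (\<lambda>S. S ** transpose S = \<Lambda> \<and> S *v ones = 0) S"
    then obtain S0 where max_0: "maximizes_trace_form Qc (\<lambda>S. S ** transpose S = \<Lambda>) S0"
      using trace_form_maximizer_exists unfolding maximizes_trace_form_def by blast
    have "trace_form Qc S0 \<le> trace_form Qc S"
      using max_I max_0 centered[OF max_0] QI_Qc unfolding maximizes_trace_form_def by metis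
    then show "maximizes_trace_form Qc (\<lambda>S. S ** transpose S = \<Lambda>) S"
      using max_I max_0 unfolding maximizes_trace_form_def by force
  next
    assume "maximizes_trace_form Qc (\<lambda>S. S ** transpose S = \<Lambda>) S"
    then show "maximizes_trace_form QI (\<lambda>S. S ** transpose S = \<Lambda> \<and> S *v ones = 0) S"
      using centered QI_Qc unfolding maximizes_trace_form_def by metis
  qed
qed

section \<open>Ordered orthonormal eigenbases\<close>

lemma orthonormal_expansion:
  fixes u :: "nat \<Rightarrow> real^'m"
  assumes on: "\<And>j k. j < CARD('m) \<Longrightarrow> k < CARD('m) \<Longrightarrow> u j \<bullet> u k = (if j = k then 1 else 0)"
  shows "x = (\<Sum>j<CARD('m). (x \<bullet> u j) *\<^sub>R u j)"
proof -
  let ?m = "CARD('m)"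
  let ?B = "u ` {..<?m}"
  have inj: "inj_on u {..<?m}"
  proof (rule inj_onI)
    fix j k assume "j \<in> {..<?m}" "k \<in> {..<?m}" "u j = u k"
    then show "j = k" using on[of j k] on[of j j] by (auto split: if_splits)
  qed
  have po: "pairwise orthogonal ?B"
    unfolding pairwise_def orthogonal_def using on by fastforce
  have n0: "0 \<notin> ?B" using on by fastforce
  have ind: "independent ?B" by (rule pairwise_orthogonal_independent[OF po n0])
  have cB: "card ?B = ?m" using inj by (simp add: card_image)
  have sp: "UNIV \<subseteq> span ?B"
    by (rule card_ge_dim_independent) (use ind cB dim_UNIV_cart in auto)
  define y where "y = x - (\<Sum>j<?m. (x \<bullet> u j) *\<^sub>R u j)"
  have yo: "y \<bullet> u k = 0" if "k < ?m" for k
  proof -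
    have "(\<Sum>j<?m. (x \<bullet> u j) *\<^sub>R u j) \<bullet> u k = (\<Sum>j<?m. (x \<bullet> u j) * (if j = k then 1 else 0))"
      by (simp add: inner_sum_left on that)
    also have "\<dots> = x \<bullet> u k" using that by (simp add: if_distrib cong: if_cong)
    finally show ?thesis by (simp add: y_def inner_diff_left)
  qed
  have "orthogonal y y"
    by (rule orthogonal_to_span[of y ?B]) (use sp yo in \<open>auto simp: orthogonal_def\<close>)
  then have "y = 0" by (simp add: orthogonal_def)
  then show ?thesis by (simp add: y_def)
qed

lemma quadratic_form_eigenbasis:
  fixes u :: "nat \<Rightarrow> real^'m" and Q :: "real^'m^'m"
  assumes on: "\<And>j k. j < CARD('m) \<Longrightarrow> k < CARD('m) \<Longrightarrow> u j \<bullet> u k = (if j = k then 1 else 0)"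
    and ev: "\<And>j. j < CARD('m) \<Longrightarrow> Q *v u j = \<mu> j *\<^sub>R u j"
  shows "x \<bullet> (Q *v x) = (\<Sum>j<CARD('m). (x \<bullet> u j)\<^sup>2 * \<mu> j)"
proof -
  have "Q *v x = Q *v (\<Sum>j<CARD('m). (x \<bullet> u j) *\<^sub>R u j)" using orthonormal_expansion[OF on, of x] by simp
  also have "\<dots> = (\<Sum>j<CARD('m). ((x \<bullet> u j) * \<mu> j) *\<^sub>R u j)"
    by (simp add: matrix_vector_mult_sum matrix_vector_mult_scaleR ev)
  finally have "x \<bullet> (Q *v x) = (\<Sum>j<CARD('m). ((x \<bullet> u j) * \<mu> j) * (x \<bullet> u j))"
    by (simp add: inner_sum_right)
  then show ?thesis by (simp add: power2_eq_square mult_ac)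
qed

lemma parseval_orthonormal:
  fixes u :: "nat \<Rightarrow> real^'m"
  assumes on: "\<And>j k. j < CARD('m) \<Longrightarrow> k < CARD('m) \<Longrightarrow> u j \<bullet> u k = (if j = k then 1 else 0)"
  shows "x \<bullet> x = (\<Sum>j<CARD('m). (x \<bullet> u j)\<^sup>2)"
  using quadratic_form_eigenbasis[OF on, of "mat 1" "\<lambda>_. 1" x] by simp

lemma least_eigenvalue_zero:
  fixes Q :: "real^'m^'m"
  assumes on: "\<And>j k. j < CARD('m) \<Longrightarrow> k < CARD('m) \<Longrightarrow> u j \<bullet> u k = (if j = k then 1 else 0)"
    and ev: "\<And>j. j < CARD('m) \<Longrightarrow> Q *v u j = \<mu> j *\<^sub>R u j"
    and ord: "\<And>j k. j \<le> k \<Longrightarrow> k < CARD('m) \<Longrightarrow> \<mu> k \<le> \<mu> j"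
    and psd: "\<And>x. 0 \<le> x \<bullet> (Q *v x)"
    and "Q *v z = 0" "z \<noteq> 0"
  shows "\<mu> (CARD('m) - 1) = 0"
proof -
  let ?l = "CARD('m) - 1"
  have "0 \<le> \<mu> ?l" using psd[of "u ?l"] ev[of ?l] on[of ?l ?l] by simp
  moreover have "(z \<bullet> z) * \<mu> ?l \<le> 0"
  proof -
    have "(z \<bullet> z) * \<mu> ?l = (\<Sum>j<CARD('m). (z \<bullet> u j)\<^sup>2 * \<mu> ?l)"
      by (simp add: parseval_orthonormal[OF on] sum_distrib_right)
    also have "\<dots> \<le> (\<Sum>j<CARD('m). (z \<bullet> u j)\<^sup>2 * \<mu> j)"
      using ord by (intro sum_mono mult_left_mono) auto
    also have "\<dots> = z \<bullet> (Q *v z)" by (rule quadratic_form_eigenbasis[OF on ev, symmetric])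
    finally show ?thesis using \<open>Q *v z = 0\<close> by simp
  qed
  moreover have "0 < z \<bullet> z" using \<open>z \<noteq> 0\<close> by simp
  ultimately show ?thesis by (simp add: mult_le_0_iff)
qed

text \<open>Courant-Fischer: the d-dimensional range of B meets the orthogonal complement of the
  first d-1 eigenvectors, where the form is at most \<mu> (d-1).\<close>
lemma eigenvalue_pos_of_pos_on_range:
  fixes Q :: "real^'m^'m" and B :: "real^'d^'m"
  assumes on: "\<And>j k. j < CARD('m) \<Longrightarrow> k < CARD('m) \<Longrightarrow> u j \<bullet> u k = (if j = k then 1 else 0)"
    and ev: "\<And>j. j < CARD('m) \<Longrightarrow> Q *v u j = \<mu> j *\<^sub>R u j"
    and ord: "\<And>j k. j \<le> k \<Longrightarrow> k < CARD('m) \<Longrightarrow> \<mu> k \<le> \<mu> j"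
    and pos: "\<And>y. y \<noteq> 0 \<Longrightarrow> 0 < (B *v y) \<bullet> (Q *v (B *v y))"
  shows "0 < \<mu> (CARD('d) - 1)"
proof (rule ccontr)
  let ?d = "CARD('d)"
  assume nonpos: "\<not> 0 < \<mu> (?d - 1)"
  define U where "U = (\<lambda>j. transpose B *v u j) ` {..<?d - 1}"
  have "span U \<noteq> UNIV"
  proof
    assume "span U = UNIV"
    then have "?d \<le> card U"
      by (metis dim_UNIV_cart dim_span dim_le_card' U_def finite_imageI finite_lessThan)
    also have "\<dots> \<le> ?d - 1" unfolding U_def by (metis card_image_le finite_lessThan card_lessThan)
    finally show False using zero_less_card_finite[where 'a = 'd] by linarith
  qed
  then obtain y where "y \<noteq> 0" and y_orth: "\<forall>x\<in>span U. y \<bullet> x = 0"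
    using span_not_UNIV_orthogonal by blast
  define x where "x = B *v y"
  have x_orth: "x \<bullet> u j = 0" if "j < ?d - 1" for j
    using y_orth that inner_transpose_matrix_vector[of "transpose B" y "u j"]
    by (auto simp: x_def U_def intro: span_base)
  have "x \<bullet> (Q *v x) = (\<Sum>j<CARD('m). (x \<bullet> u j)\<^sup>2 * \<mu> j)"
    by (rule quadratic_form_eigenbasis[OF on ev])
  also have "\<dots> \<le> 0"
  proof (rule sum_nonpos)
    fix j assume "j \<in> {..<CARD('m)}"
    then have "j < ?d - 1 \<or> \<mu> j \<le> 0" using ord[of "?d - 1" j] nonpos by force
    then show "(x \<bullet> u j)\<^sup>2 * \<mu> j \<le> 0" by (auto simp: x_orth mult_nonneg_nonpos)
  qed
  finally show False using pos[OF \<open>y \<noteq> 0\<close>] by (simp add: x_def)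
qed

lemma top_eigvecs_of_top_eigvecs_excl_ones:
  fixes Qc :: "real^'m^'m"
  assumes Qc_ones: "Qc *v ones = 0"
    and psd: "\<And>x. 0 \<le> x \<bullet> (Qc *v x)"
    and excl: "top_eigvecs_excl_ones (c *\<^sub>R ones_mat + Qc) d v"
  shows "top_eigvecs Qc d v"
proof -
  let ?l = "CARD('m) - 1"
  from excl obtain u \<mu> where d: "d \<le> ?l"
    and u_ones: "\<forall>j<?l. u j \<bullet> ones = 0"
    and on: "\<forall>j<?l. \<forall>k<?l. u j \<bullet> u k = (if j = k then 1 else 0)"
    and ev: "\<forall>j<?l. (c *\<^sub>R ones_mat + Qc) *v u j = \<mu> j *\<^sub>R u j"
    and ord: "\<forall>j k. j \<le> k \<and> k < ?l \<longrightarrow> \<mu> k \<le> \<mu> j"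
    and vu: "\<forall>k<d. v k = u k"
    unfolding top_eigvecs_excl_ones_def by blast
  define e :: "real^'m" where "e = (1 / sqrt (real CARD('m))) *\<^sub>R ones"
  have e_unit: "e \<bullet> e = 1" by (simp add: e_def inner_ones_ones)
  have u_e: "u j \<bullet> e = 0" "e \<bullet> u j = 0" if "j < ?l" for j
    using u_ones that by (simp_all add: e_def inner_commute)
  have Qc_e: "Qc *v e = 0" by (simp add: e_def matrix_vector_mult_scaleR Qc_ones)
  have ev_c: "Qc *v u j = \<mu> j *\<^sub>R u j" if "j < ?l" for j
    using ev u_ones that by (simp add: matrix_vector_ones_mat_plus inner_commute)
  have \<mu>_nonneg: "0 \<le> \<mu> j" if "j < ?l" for j
    using psd[of "u j"] ev_c[OF that] on that by simp
  define u' where "u' j = (if j < ?l then u j else e)" for j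
  define \<mu>' where "\<mu>' j = (if j < ?l then \<mu> j else 0)" for j
  show ?thesis
    unfolding top_eigvecs_def
  proof (intro conjI exI[of _ u'] exI[of _ \<mu>'])
    show "d \<le> CARD('m)" using d by simp
    show "\<forall>j<CARD('m). \<forall>k<CARD('m). u' j \<bullet> u' k = (if j = k then 1 else 0)"
    proof (intro allI impI)
      fix j k assume "j < CARD('m)" "k < CARD('m)"
      then consider "j < ?l" "k < ?l" | "j < ?l" "k = ?l" | "j = ?l" "k < ?l" | "j = ?l" "k = ?l"
        by linarith
      then show "u' j \<bullet> u' k = (if j = k then 1 else 0)"
      proof cases
        case 1 then show ?thesis using on by (simp add: u'_def)
      next
        case 2 then show ?thesis using u_e by (simp add: u'_def)
      next
        case 3 then show ?thesis using u_e by (simp add: u'_def)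
      next
        case 4 then show ?thesis using e_unit by (simp add: u'_def)
      qed
    qed
    show "\<forall>j<CARD('m). Qc *v u' j = \<mu>' j *\<^sub>R u' j"
      using ev_c Qc_e by (simp add: u'_def \<mu>'_def)
    show "\<forall>j k. j \<le> k \<and> k < CARD('m) \<longrightarrow> \<mu>' k \<le> \<mu>' j"
      using ord \<mu>_nonneg by (auto simp: \<mu>'_def)
    show "\<forall>k<d. v k = u' k"
      using vu d by (simp add: u'_def)
  qed
qed

lemma top_eigvecs_excl_ones_of_top_eigvecs:
  fixes Qc :: "real^'m^'m" and B :: "real^'d^'m"
  assumes sym: "\<And>x y. x \<bullet> (Qc *v y) = y \<bullet> (Qc *v x)"
    and Qc_ones: "Qc *v ones = 0"
    and psd: "\<And>x. 0 \<le> x \<bullet> (Qc *v x)"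
    and B_pos: "\<And>y. y \<noteq> 0 \<Longrightarrow> 0 < (B *v y) \<bullet> (Qc *v (B *v y))"
    and dm: "CARD('d) \<le> CARD('m) - 1"
    and top: "top_eigvecs Qc CARD('d) v"
  shows "top_eigvecs_excl_ones (c *\<^sub>R ones_mat + Qc) CARD('d) v"
proof -
  let ?m = "CARD('m)" and ?d = "CARD('d)"
  let ?l = "?m - 1"
  from top obtain u \<mu> where
        on: "\<forall>j<?m. \<forall>k<?m. u j \<bullet> u k = (if j = k then 1 else 0)"
    and ev: "\<forall>j<?m. Qc *v u j = \<mu> j *\<^sub>R u j"
    and ord: "\<forall>j k. j \<le> k \<and> k < ?m \<longrightarrow> \<mu> k \<le> \<mu> j"
    and vu: "\<forall>k<?d. v k = u k"
    unfolding top_eigvecs_def by blast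
  note on = on[rule_format] and ev = ev[rule_format] and ord = ord[rule_format, OF conjI]
  have "0 < ?d" by simp
  then have l: "?l < ?m" "?d - 1 < ?l" using dm by linarith+
  have "(ones::real^'m) \<noteq> 0" by (metis ones_nth zero_index zero_neq_one)
  then have \<mu>_l: "\<mu> ?l = 0"
    using least_eigenvalue_zero[where u = u and \<mu> = \<mu> and Q = Qc and z = ones] on ev ord psd Qc_ones
    by blast
  have \<mu>_top: "0 < \<mu> k" if "k < ?d" for k
    using eigenvalue_pos_of_pos_on_range[OF on ev ord B_pos] ord[of k "?d - 1"] l that by force
  have top_ones: "u k \<bullet> ones = 0" if "k < ?d" for k
  proof -
    have "\<mu> k * (u k \<bullet> ones) = ones \<bullet> (Qc *v u k)"
      using ev[of k] l that by (simp add: inner_commute)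
    also have "\<dots> = 0" using sym[of ones "u k"] Qc_ones by simp
    finally show ?thesis using \<mu>_top[OF that] by simp
  qed
  define e :: "real^'m" where "e = (1 / sqrt (real ?m)) *\<^sub>R ones"
  have ones_e: "ones = sqrt (real ?m) *\<^sub>R e" by (simp add: e_def)
  define w where "w = u ?l - e"
  have Qc_w: "Qc *v w = 0"
    using ev[of ?l] l \<mu>_l by (simp add: w_def e_def matrix_vector_mult_diff_distrib
        matrix_vector_mult_scaleR Qc_ones)
  have "u ?l \<bullet> u ?l = 1" "e \<bullet> e = 1"
    using on[of ?l ?l] l by (simp_all add: e_def inner_ones_ones)
  then have H_l: "householder w (u ?l) = e"
    unfolding w_def by (intro householder_diff_eq) (simp add: norm_eq_sqrt_inner)
  have Qc_H: "Qc *v householder w x = Qc *v x" for x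
    by (simp add: householder_def matrix_vector_mult_diff_distrib matrix_vector_mult_scaleR Qc_w)
  have H_Qc: "householder w (Qc *v x) = Qc *v x" for x
    using sym[of w x] Qc_w by (simp add: householder_orthogonal)
  define u' where "u' j = householder w (u j)" for j
  have u'_e: "u' j \<bullet> e = 0" if "j < ?l" for j
    using on[of j ?l] l that by (simp flip: H_l add: u'_def inner_householder)
  show ?thesis
    unfolding top_eigvecs_excl_ones_def
  proof (intro conjI exI[of _ u'] exI[of _ \<mu>])
    show "?d \<le> ?l" by (rule dm)
    show "\<exists>c'. (c *\<^sub>R ones_mat + Qc) *v ones = c' *\<^sub>R ones"
      by (simp add: matrix_vector_ones_mat_plus Qc_ones)
    show "\<forall>j<?l. u' j \<bullet> ones = 0"
      using u'_e by (simp add: ones_e)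
    show "\<forall>j<?l. \<forall>k<?l. u' j \<bullet> u' k = (if j = k then 1 else 0)"
      using on l by (simp add: u'_def inner_householder)
    show "\<forall>j<?l. (c *\<^sub>R ones_mat + Qc) *v u' j = \<mu> j *\<^sub>R u' j"
    proof (intro allI impI)
      fix j assume "j < ?l"
      then have "ones \<bullet> u' j = 0" using u'_e by (simp add: ones_e inner_commute)
      then have "(c *\<^sub>R ones_mat + Qc) *v u' j = Qc *v u j"
        by (simp add: matrix_vector_ones_mat_plus u'_def Qc_H)
      also have "\<dots> = householder w (Qc *v u j)" by (simp only: H_Qc)
      also have "\<dots> = \<mu> j *\<^sub>R u' j"
        using ev[of j] \<open>j < ?l\<close> l by (simp add: u'_def householder_scaleR)
      finally show "(c *\<^sub>R ones_mat + Qc) *v u' j = \<mu> j *\<^sub>R u' j" .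
    qed
    show "\<forall>j k. j \<le> k \<and> k < ?l \<longrightarrow> \<mu> k \<le> \<mu> j" using ord by auto
    show "\<forall>k<?d. v k = u' k"
    proof (intro allI impI)
      fix k assume "k < ?d"
      then have "u ?l \<bullet> u k = 0" "e \<bullet> u k = 0"
        using on[of ?l k] top_ones[of k] l by (auto simp: e_def inner_commute)
      then have "w \<bullet> u k = 0" by (simp add: w_def inner_diff_left)
      then show "v k = u' k" using vu \<open>k < ?d\<close> by (simp add: u'_def householder_orthogonal)
    qed
  qed
qed

theorem proposition3:
  fixes D :: "nat \<Rightarrow> real^'m^'d" and n :: nat and \<Lambda> :: "real^'d^'d"
  assumes "n \<ge> 1"
    and "\<forall>i\<in>{1..n}. invertible (aug_mat (D i) ** transpose (aug_mat (D i)))"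
    and "\<forall>a b. a \<noteq> b \<longrightarrow> \<Lambda> $ a $ b = 0"
  shows "(let QI = (\<Sum>i=1..n. transpose (aug_mat (D i))
                     ** matrix_inv (aug_mat (D i) ** transpose (aug_mat (D i))) ** aug_mat (D i));
              Qc = (\<Sum>i=1..n. transpose (centered_mat (D i))
                     ** matrix_inv (centered_mat (D i) ** transpose (centered_mat (D i)))
                     ** centered_mat (D i))
          in QI = (real n / real CARD('m)) *\<^sub>R ones_mat + Qc
           \<and> (\<forall>v. top_eigvecs_excl_ones QI CARD('d) v \<longleftrightarrow> top_eigvecs Qc CARD('d) v)
           \<and> {S. opt_ref_shape n (\<lambda>i. aug_mat (D i))
                   (\<lambda>S. S ** transpose S = \<Lambda> \<and> S *v ones = 0) S}
             = {S. opt_ref_shape n (\<lambda>i. centered_mat (D i))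
                   (\<lambda>S. S ** transpose S = \<Lambda>) S})"
proof -
  note inv_aug = assms(2)
  have inv_c: "\<forall>i\<in>{1..n}. invertible (centered_mat (D i) ** transpose (centered_mat (D i)))"
    using inv_aug by (simp add: invertible_gram_centered_mat)
  define QI where "QI = (\<Sum>i=1..n. row_proj (aug_mat (D i)))"
  define Qc where "Qc = (\<Sum>i=1..n. row_proj (centered_mat (D i)))"
  define B where "B = transpose (centered_mat (D 1))"
  have sym: "\<And>x y. x \<bullet> (Qc *v y) = y \<bullet> (Qc *v x)"
    and psd: "\<And>x. 0 \<le> x \<bullet> (Qc *v x)"
    and Qc_ones: "Qc *v ones = 0"
    unfolding Qc_def using inv_c
    by (rule sum_row_proj_symmetric, rule sum_row_proj_nonneg,
        simp add: sum_row_proj_kernel centered_mat_ones)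
  have B_pos: "\<And>y. y \<noteq> 0 \<Longrightarrow> 0 < (B *v y) \<bullet> (Qc *v (B *v y))"
    unfolding Qc_def B_def using inv_c assms(1) by (intro sum_row_proj_pos) auto
  have B_ones: "\<And>y. ones \<bullet> (B *v y) = 0"
    unfolding B_def by (rule ones_orthogonal_transpose_centered_mat)
  have QI_Qc: "QI = (real n / real CARD('m)) *\<^sub>R ones_mat + Qc"
    unfolding QI_def Qc_def using inv_aug by (rule sum_row_proj_aug_mat)
  have "CARD('d) \<le> CARD('m) - 1"
    using card_le_of_invertible_aug_gram[of "D 1"] inv_aug assms(1) by simp
  then have eigvecs: "top_eigvecs_excl_ones QI CARD('d) v \<longleftrightarrow> top_eigvecs Qc CARD('d) v" for v
    unfolding QI_Qc
    using top_eigvecs_of_top_eigvecs_excl_ones[OF Qc_ones psd]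
      top_eigvecs_excl_ones_of_top_eigvecs[OF sym Qc_ones psd B_pos] by blast
  have "trace_form QI S = trace_form Qc S" if "S *v ones = 0" for S :: "real^'m^'d"
    using that by (simp add: QI_Qc trace_form_add trace_form_scaleR trace_form_ones_mat)
  then have centered_iff:
    "maximizes_trace_form QI (\<lambda>S. S ** transpose S = \<Lambda> \<and> S *v ones = 0) S
       \<longleftrightarrow> maximizes_trace_form Qc (\<lambda>S. S ** transpose S = \<Lambda>) S" for S
    using B_pos B_ones by (intro maximizes_trace_form_centered_iff[OF sym Qc_ones])
  have "opt_ref_shape n (\<lambda>i. aug_mat (D i)) (\<lambda>S. S ** transpose S = \<Lambda> \<and> S *v ones = 0) S
      \<longleftrightarrow> maximizes_trace_form QI (\<lambda>S. S ** transpose S = \<Lambda> \<and> S *v ones = 0) S"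
    "opt_ref_shape n (\<lambda>i. centered_mat (D i)) (\<lambda>S. S ** transpose S = \<Lambda>) S
      \<longleftrightarrow> maximizes_trace_form Qc (\<lambda>S. S ** transpose S = \<Lambda>) S" for S
    unfolding QI_def Qc_def
    by (rule opt_ref_shape_iff_maximizes_trace_form[OF inv_aug, where K = "\<Sum>k\<in>UNIV. \<Lambda> $ k $ k"]
        opt_ref_shape_iff_maximizes_trace_form[OF inv_c, where K = "\<Sum>k\<in>UNIV. \<Lambda> $ k $ k"],
        simp add: power2_norm_of_gram)+
  then have shapes: "opt_ref_shape n (\<lambda>i. aug_mat (D i)) (\<lambda>S. S ** transpose S = \<Lambda> \<and> S *v ones = 0) S
      \<longleftrightarrow> opt_ref_shape n (\<lambda>i. centered_mat (D i)) (\<lambda>S. S ** transpose S = \<Lambda>) S" for S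
    using centered_iff by simp
  show ?thesis
    unfolding Let_def row_proj_def[symmetric] QI_def[symmetric] Qc_def[symmetric]
    using QI_Qc eigvecs shapes by blast
qed

end
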